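(* Let $S\in(0,1)$, $f_S,f_C,h_S,h_C>0$ and $\lambda_S,\lambda_C>0$. Put $A_S=\lambda_S/f_S$ and $A_C=\lambda_C/h_C$. The planar system \[ SB'=f_S\,(SB+A_S)(S-SB)-h_S\,CR\cdot SB,\qquad CR'=f_C\,CR\,(1-S-CR)-h_C\,(SB+A_C)\,CR \] has no limit cycle (no nonconstant periodic orbit) contained in the open rectangle $(0,S)\times(0,1-S)$.
   Context: Armed-revolt model with direct foreign intervention on Blue's side. A population of total size $1$ is split into a fixed fraction $S$ of supporters of Blue and $1-S$ of contrarians. $SB$ and $CR$ are the fractions of the total population that are supporters controlled by Blue and contrarians controlled by Red. The remaining fractions are $SR=S-SB$ and $CB=1-S-CR$. The full dynamics are $SB'=f_S\,SB\cdot SR-h_S\,CR\cdot SB+\lambda_S\,SR$, $SR'=-SB'$, $CR'=f_C\,CR\cdot CB-h_C\,SB\cdot CR-\lambda_C\,CR$, $CB'=-CR'$. The constants $\lambda_S,\lambda_C$ are the combat powers of the foreign force. These dynamics reduce to the planar system in the claim. *)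

theory Defs
  imports "HOL-Analysis.Analysis"
begin

definition SB_rhs :: "real \<Rightarrow> real \<Rightarrow> real \<Rightarrow> real \<Rightarrow> real \<Rightarrow> real \<Rightarrow> real" where
  "SB_rhs S fS hS lamS sb cr = fS * (sb + lamS / fS) * (S - sb) - hS * cr * sb"

definition CR_rhs :: "real \<Rightarrow> real \<Rightarrow> real \<Rightarrow> real \<Rightarrow> real \<Rightarrow> real \<Rightarrow> real" where
  "CR_rhs S fC hC lamC sb cr = fC * cr * (1 - S - cr) - hC * (sb + lamC / hC) * cr"

definition is_solution ::
  "real \<Rightarrow> real \<Rightarrow> real \<Rightarrow> real \<Rightarrow> real \<Rightarrow> real \<Rightarrow> real \<Rightarrow>
   (real \<Rightarrow> real) \<Rightarrow> (real \<Rightarrow> real) \<Rightarrow> bool" where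
  "is_solution S fS fC hS hC lamS lamC sb cr \<longleftrightarrow>
     (\<forall>t. (sb has_real_derivative SB_rhs S fS hS lamS (sb t) (cr t)) (at t) \<and>
          (cr has_real_derivative CR_rhs S fC hC lamC (sb t) (cr t)) (at t))"

definition nonconstant_periodic_orbit ::
  "real \<Rightarrow> real \<Rightarrow> real \<Rightarrow> real \<Rightarrow> real \<Rightarrow> real \<Rightarrow> real \<Rightarrow>
   (real \<Rightarrow> real) \<Rightarrow> (real \<Rightarrow> real) \<Rightarrow> bool" where
  "nonconstant_periodic_orbit S fS fC hS hC lamS lamC sb cr \<longleftrightarrow>
     is_solution S fS fC hS hC lamS lamC sb cr \<and>
     (\<exists>T>0. \<forall>t. sb (t + T) = sb t \<and> cr (t + T) = cr t) \<and>
     (\<exists>t1 t2. (sb t1, cr t1) \<noteq> (sb t2, cr t2))"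

end

theory Submission
  imports Defs
begin

(* Suppose (SB, CR) is a nonconstant periodic solution in the open rectangle
   (0,S) x (0,1-S).  Its velocity (u, v) = (SB', CR') satisfies the variational equation
   u' = a u + b v, v' = c u + d v, where a, b, c, d are the Jacobian entries of the vector
   field along the orbit.  Inside the rectangle the off-diagonal entries b = -hS SB and
   c = -hC CR are negative (the system is competitive) and all entries are bounded.
   (1) By a Gronwall argument on u^2 + v^2 the velocity never vanishes, otherwise the
       solution would be stationary.
   (2) Hence the product p = u v has negative derivative b v^2 + c u^2 at each of its zeros,
       so p has at most one zero.
   (3) But by Rolle's theorem u = SB' vanishes in (0,T) and in (T,2T), giving two zeros of p.
   The file first proves the one-variable calculus facts, then the facts about planar linear
   competitive systems, then the model-specific computations, and finally the theorem. *)

section \<open>Calculus facts on the real line\<close>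

lemma derivative_zero_between_equal_values:
  fixes f f' :: "real \<Rightarrow> real"
  assumes "a < b" "f a = f b" and D: "\<And>t. (f has_real_derivative f' t) (at t)"
  obtains z where "a < z" "z < b" "f' z = 0"
proof -
  have "continuous_on {a..b} f"
    using D by (meson DERIV_continuous continuous_at_imp_continuous_on)
  then obtain z where "a < z" "z < b" "(f has_real_derivative 0) (at z)"
    using Rolle[OF assms(1,2)] D real_differentiable_def by blast
  with DERIV_unique[OF D] that show thesis by blast
qed

lemma gronwall_forward_zero:
  fixes w w' :: "real \<Rightarrow> real"
  assumes D: "\<And>t. (w has_real_derivative w' t) (at t)"
    and growth: "\<And>t. w' t \<le> K * w t" and nonneg: "\<And>t. w t \<ge> 0"
    and zero: "w t0 = 0" and "t0 \<le> t"
  shows "w t = 0"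
proof -
  have "w t * exp (- K * t) \<le> w t0 * exp (- K * t0)"
  proof (rule DERIV_nonpos_imp_nonincreasing[OF \<open>t0 \<le> t\<close>])
    fix s
    have "((\<lambda>s. w s * exp (- K * s)) has_real_derivative (w' s - K * w s) * exp (- K * s)) (at s)"
      by (auto intro!: derivative_eq_intros D simp: algebra_simps)
    moreover have "(w' s - K * w s) * exp (- K * s) \<le> 0"
      using growth[of s] by (intro mult_nonpos_nonneg) auto
    ultimately show "\<exists>y. ((\<lambda>s. w s * exp (- K * s)) has_real_derivative y) (at s) \<and> y \<le> 0"
      by blast
  qed
  then have "w t \<le> 0" using zero by (simp add: mult_le_0_iff)
  with nonneg[of t] show ?thesis by simp
qed

text \<open>Two-sided Gronwall uniqueness, obtained from the forward version by time reversal.\<close>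
lemma gronwall_zero:
  fixes w w' :: "real \<Rightarrow> real"
  assumes D: "\<And>t. (w has_real_derivative w' t) (at t)"
    and growth: "\<And>t. \<bar>w' t\<bar> \<le> K * w t" and nonneg: "\<And>t. w t \<ge> 0"
    and zero: "w t0 = 0"
  shows "w t = 0"
proof (cases "t0 \<le> t")
  case True
  show ?thesis
    by (rule gronwall_forward_zero[OF D _ nonneg zero True]) (use growth abs_le_D1 in blast)
next
  case False
  have D': "((\<lambda>s. w (- s)) has_real_derivative - w' (- s)) (at s)" for s
    using DERIV_chain2[OF D[of "- s"] DERIV_minus[OF DERIV_ident]] by simp
  have "w (- (- t)) = 0"
    by (rule gronwall_forward_zero[OF D', of K "- t0"])
       (use growth abs_le_D2 nonneg zero False in \<open>auto\<close>)
  then show ?thesis by simp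
qed

text \<open>A function whose derivative is negative at each of its zeros can never become
  nonnegative again once it is negative: the first later zero would have to be crossed
  upwards.\<close>
lemma stays_negative:
  fixes p p' :: "real \<Rightarrow> real"
  assumes D: "\<And>t. (p has_real_derivative p' t) (at t)"
    and down: "\<And>t. p t = 0 \<Longrightarrow> p' t < 0" and neg: "p t0 < 0" and "t0 \<le> t"
  shows "p t < 0"
proof (rule ccontr)
  assume "\<not> p t < 0"
  have cont: "\<And>t. isCont p t" using D DERIV_isCont by blast
  define Z where "Z = {s \<in> {t0..t}. p s = 0}"
  have "Z \<noteq> {}"
    using IVT[of p t0 0 t] \<open>\<not> p t < 0\<close> neg \<open>t0 \<le> t\<close> cont unfolding Z_def by auto
  moreover have "closed Z" unfolding Z_def
    using continuous_closed_preimage_constant[of "{t0..t}" p 0]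
    by (simp add: continuous_at_imp_continuous_on cont)
  moreover have bdd: "bdd_below Z" unfolding Z_def by (auto intro: bdd_belowI[of _ t0])
  ultimately have "Inf Z \<in> Z" using closed_contains_Inf by blast
  define s where "s = Inf Z"
  have ps: "p s = 0" and "t0 < s"
    using \<open>Inf Z \<in> Z\<close> neg unfolding s_def Z_def by (auto simp: le_less)
  text \<open>Just before the first zero \<open>s\<close> the function is positive, so it has an earlier zero.\<close>
  obtain d where d: "d > 0" "\<And>h. h > 0 \<Longrightarrow> h < d \<Longrightarrow> p s < p (s - h)"
    using DERIV_neg_dec_left[OF D down[OF ps]] by blast
  define h where "h = min (d/2) ((s - t0)/2)"
  have "h \<le> (s - t0)/2" unfolding h_def by (rule min.cobounded2)
  then have h: "h > 0" "h < d" "t0 \<le> s - h" using d \<open>t0 < s\<close> unfolding h_def by auto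
  have "p (s - h) > 0" using d(2)[OF h(1,2)] ps by simp
  then obtain z where z: "t0 \<le> z" "z \<le> s - h" "p z = 0"
    using IVT[of p t0 0 "s - h"] neg h cont by auto
  then have "z \<in> Z" using \<open>Inf Z \<in> Z\<close> h unfolding s_def Z_def by auto
  then have "s \<le> z" unfolding s_def using bdd by (simp add: cInf_lower)
  with z h show False by simp
qed

lemma at_most_one_zero:
  fixes p p' :: "real \<Rightarrow> real"
  assumes D: "\<And>t. (p has_real_derivative p' t) (at t)"
    and down: "\<And>t. p t = 0 \<Longrightarrow> p' t < 0" and "p t1 = 0" "p t2 = 0"
  shows "t1 = t2"
proof (rule ccontr)
  assume "t1 \<noteq> t2"
  then obtain r s where zeros: "p r = 0" "p s = 0" and "r < s"
    using assms(3,4) by (metis linorder_neq_iff)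
  obtain d where d: "d > 0" "\<And>h. h > 0 \<Longrightarrow> h < d \<Longrightarrow> p (r + h) < p r"
    using DERIV_neg_dec_right[OF D down[OF zeros(1)]] by blast
  define h where "h = min (d/2) (s - r)"
  have h: "h > 0" "h < d" "r + h \<le> s" using d \<open>r < s\<close> unfolding h_def by auto
  have "p (r + h) < 0" using d(2)[OF h(1,2)] zeros(1) by simp
  then have "p s < 0" using stays_negative[OF D down] h(3) by blast
  with zeros(2) show False by simp
qed

section \<open>Planar linear systems\<close>

lemma quadratic_form_bound:
  fixes a b c d u v A :: real
  assumes "\<bar>a\<bar> + \<bar>b\<bar> + \<bar>c\<bar> + \<bar>d\<bar> \<le> A"
  shows "\<bar>a * u\<^sup>2 + (b + c) * u * v + d * v\<^sup>2\<bar> \<le> A * (u\<^sup>2 + v\<^sup>2)"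
proof -
  have "2 * (\<bar>u\<bar> * \<bar>v\<bar>) \<le> u\<^sup>2 + v\<^sup>2"
    using sum_squares_bound[of "\<bar>u\<bar>" "\<bar>v\<bar>"] by simp
  then have uv: "\<bar>u * v\<bar> \<le> u\<^sup>2 + v\<^sup>2"
    unfolding abs_mult using mult_nonneg_nonneg[OF abs_ge_zero abs_ge_zero, of u v] by linarith
  have "\<bar>(b + c) * u * v\<bar> \<le> (\<bar>b\<bar> + \<bar>c\<bar>) * \<bar>u * v\<bar>"
    unfolding mult.assoc abs_mult[of "b + c"] by (intro mult_right_mono abs_triangle_ineq) auto
  then have "\<bar>a * u\<^sup>2 + (b + c) * u * v + d * v\<^sup>2\<bar> \<le> \<bar>a\<bar> * u\<^sup>2 + (\<bar>b\<bar> + \<bar>c\<bar>) * \<bar>u * v\<bar> + \<bar>d\<bar> * v\<^sup>2"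
    using abs_triangle_ineq[of "a * u\<^sup>2 + (b + c) * u * v" "d * v\<^sup>2"]
      abs_triangle_ineq[of "a * u\<^sup>2" "(b + c) * u * v"]
    by (simp add: abs_mult)
  also have "\<dots> \<le> \<bar>a\<bar> * (u\<^sup>2 + v\<^sup>2) + (\<bar>b\<bar> + \<bar>c\<bar>) * (u\<^sup>2 + v\<^sup>2) + \<bar>d\<bar> * (u\<^sup>2 + v\<^sup>2)"
    by (intro add_mono mult_left_mono uv) auto
  also have "\<dots> = (\<bar>a\<bar> + \<bar>b\<bar> + \<bar>c\<bar> + \<bar>d\<bar>) * (u\<^sup>2 + v\<^sup>2)"
    by (simp add: algebra_simps)
  also have "\<dots> \<le> A * (u\<^sup>2 + v\<^sup>2)" by (intro mult_right_mono assms) auto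
  finally show ?thesis .
qed

lemma linear_system_zero_propagates:
  fixes u v a b c d :: "real \<Rightarrow> real"
  assumes Du: "\<And>t. (u has_real_derivative a t * u t + b t * v t) (at t)"
    and Dv: "\<And>t. (v has_real_derivative c t * u t + d t * v t) (at t)"
    and bound: "\<And>t. \<bar>a t\<bar> + \<bar>b t\<bar> + \<bar>c t\<bar> + \<bar>d t\<bar> \<le> K"
    and "u t0 = 0" "v t0 = 0"
  shows "u t = 0 \<and> v t = 0"
proof -
  define w where "w t = (u t)\<^sup>2 + (v t)\<^sup>2" for t
  define w' where "w' t = 2 * (a t * (u t)\<^sup>2 + (b t + c t) * u t * v t + d t * (v t)\<^sup>2)" for t
  have "(w has_real_derivative w' t) (at t)" for t
    unfolding w_def[abs_def] w'_def
    by (auto intro!: derivative_eq_intros Du Dv simp: algebra_simps power2_eq_square)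
  moreover have "\<bar>w' t\<bar> \<le> (2 * K) * w t" for t
    using quadratic_form_bound[OF bound[of t], of "u t" "v t"] unfolding w_def w'_def by simp
  moreover have "w t \<ge> 0" for t unfolding w_def by simp
  moreover have "w t0 = 0" unfolding w_def using assms(4,5) by simp
  ultimately have "w t = 0" by (rule gronwall_zero)
  then show ?thesis unfolding w_def by (simp add: add_nonneg_eq_0_iff)
qed

text \<open>For a competitive system (negative off-diagonal coefficients) the product \<open>u v\<close> of a
  nonvanishing solution decreases strictly through each of its zeros.\<close>
lemma competitive_product_derivative_at_zero:
  fixes u v a b c d :: real
  assumes "b < 0" "c < 0" and "u \<noteq> 0 \<or> v \<noteq> 0" and "u * v = 0"
  shows "(a * u + b * v) * v + (c * u + d * v) * u < 0"
proof -
  have "(a * u + b * v) * v + (c * u + d * v) * u = b * v\<^sup>2 + c * u\<^sup>2"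
    using \<open>u * v = 0\<close> by (auto simp: algebra_simps power2_eq_square)
  also have "\<dots> < 0"
    using assms by (auto intro: add_neg_nonpos add_nonpos_neg simp: mult_neg_pos mult_nonpos_nonneg)
  finally show ?thesis .
qed

lemma competitive_product_at_most_one_zero:
  fixes u v a b c d :: "real \<Rightarrow> real"
  assumes Du: "\<And>t. (u has_real_derivative a t * u t + b t * v t) (at t)"
    and Dv: "\<And>t. (v has_real_derivative c t * u t + d t * v t) (at t)"
    and "\<And>t. b t < 0" "\<And>t. c t < 0" and "\<And>t. u t \<noteq> 0 \<or> v t \<noteq> 0"
    and "u r * v r = 0" "u s * v s = 0"
  shows "r = s"
proof (rule at_most_one_zero[OF DERIV_mult[OF Du Dv] _ assms(6,7)])
  fix t assume "u t * v t = 0"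
  then show "(a t * u t + b t * v t) * v t + (c t * u t + d t * v t) * u t < 0"
    by (rule competitive_product_derivative_at_zero[OF assms(3-5)])
qed

section \<open>The revolt model\<close>

definition jac_SS :: "real \<Rightarrow> real \<Rightarrow> real \<Rightarrow> real \<Rightarrow> real \<Rightarrow> real \<Rightarrow> real" where
  "jac_SS S fS hS lamS sb cr = fS * (S - sb) - fS * (sb + lamS / fS) - hS * cr"

definition jac_SC :: "real \<Rightarrow> real \<Rightarrow> real \<Rightarrow> real" where
  "jac_SC hS sb cr = - hS * sb"

definition jac_CS :: "real \<Rightarrow> real \<Rightarrow> real \<Rightarrow> real" where
  "jac_CS hC sb cr = - hC * cr"

definition jac_CC :: "real \<Rightarrow> real \<Rightarrow> real \<Rightarrow> real \<Rightarrow> real \<Rightarrow> real \<Rightarrow> real" where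
  "jac_CC S fC hC lamC sb cr = fC * (1 - S - cr) - fC * cr - hC * (sb + lamC / hC)"

lemma vector_field_chain_rule:
  assumes Dsb: "\<And>t. (sb has_real_derivative x t) (at t)"
    and Dcr: "\<And>t. (cr has_real_derivative y t) (at t)"
  shows "((\<lambda>t. SB_rhs S fS hS lamS (sb t) (cr t)) has_real_derivative
            jac_SS S fS hS lamS (sb t) (cr t) * x t + jac_SC hS (sb t) (cr t) * y t) (at t)"
    and "((\<lambda>t. CR_rhs S fC hC lamC (sb t) (cr t)) has_real_derivative
            jac_CS hC (sb t) (cr t) * x t + jac_CC S fC hC lamC (sb t) (cr t) * y t) (at t)"
  unfolding SB_rhs_def CR_rhs_def jac_SS_def jac_SC_def jac_CS_def jac_CC_def
  by (auto intro!: derivative_eq_intros Dsb Dcr simp: algebra_simps)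

lemma velocity_variational_equation:
  assumes "is_solution S fS fC hS hC lamS lamC sb cr"
  defines "u \<equiv> \<lambda>t. SB_rhs S fS hS lamS (sb t) (cr t)"
    and "v \<equiv> \<lambda>t. CR_rhs S fC hC lamC (sb t) (cr t)"
  shows "(u has_real_derivative
            jac_SS S fS hS lamS (sb t) (cr t) * u t + jac_SC hS (sb t) (cr t) * v t) (at t)"
    and "(v has_real_derivative
            jac_CS hC (sb t) (cr t) * u t + jac_CC S fC hC lamC (sb t) (cr t) * v t) (at t)"
proof -
  have "\<And>t. (sb has_real_derivative u t) (at t)" "\<And>t. (cr has_real_derivative v t) (at t)"
    using assms(1) unfolding is_solution_def u_def v_def by blast+
  from vector_field_chain_rule[OF this] show
    "(u has_real_derivative
        jac_SS S fS hS lamS (sb t) (cr t) * u t + jac_SC hS (sb t) (cr t) * v t) (at t)"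
    "(v has_real_derivative
        jac_CS hC (sb t) (cr t) * u t + jac_CC S fC hC lamC (sb t) (cr t) * v t) (at t)"
    unfolding u_def v_def .
qed

lemma jacobian_bounded_on_rectangle:
  assumes "S < 1" "fS > 0" "fC > 0" "hS > 0" "hC > 0" "lamS > 0" "lamC > 0"
  shows "\<exists>K. \<forall>sb cr. 0 < sb \<and> sb < S \<and> 0 < cr \<and> cr < 1 - S \<longrightarrow>
           \<bar>jac_SS S fS hS lamS sb cr\<bar> + \<bar>jac_SC hS sb cr\<bar> + \<bar>jac_CS hC sb cr\<bar>
             + \<bar>jac_CC S fC hC lamC sb cr\<bar> \<le> K"
proof (intro exI allI impI)
  fix sb cr :: real
  assume box: "0 < sb \<and> sb < S \<and> 0 < cr \<and> cr < 1 - S"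
  have prods: "fS * sb \<le> fS * S" "fS * S \<le> fS" "hS * cr \<le> hS" "hS * sb \<le> hS"
    "hC * cr \<le> hC" "hC * sb \<le> hC" "fC * cr \<le> fC" "fC * S \<le> fC"
    using box assms by (auto intro: mult_left_mono simp: mult_le_cancel_left1)
  have nonneg: "0 \<le> fS * sb" "0 \<le> fS * S" "0 \<le> hS * cr" "0 \<le> hS * sb"
    "0 \<le> hC * cr" "0 \<le> hC * sb" "0 \<le> fC * cr" "0 \<le> fC * S"
    using box assms by auto
  have "jac_SS S fS hS lamS sb cr = fS * S - 2 * (fS * sb) - lamS - hS * cr"
    and "jac_CC S fC hC lamC sb cr = fC - fC * S - 2 * (fC * cr) - hC * sb - lamC"
    and "\<bar>jac_SC hS sb cr\<bar> = hS * sb" and "\<bar>jac_CS hC sb cr\<bar> = hC * cr"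
    using assms nonneg unfolding jac_SS_def jac_CC_def jac_SC_def jac_CS_def
    by (simp_all add: algebra_simps)
  then show "\<bar>jac_SS S fS hS lamS sb cr\<bar> + \<bar>jac_SC hS sb cr\<bar> + \<bar>jac_CS hC sb cr\<bar>
               + \<bar>jac_CC S fC hC lamC sb cr\<bar> \<le> 3 * fS + lamS + 2 * hS + 2 * hC + 3 * fC + lamC"
    using prods nonneg assms by linarith
qed

lemma jacobian_competitive:
  assumes "hS > 0" "hC > 0" "sb > 0" "cr > 0"
  shows "jac_SC hS sb cr < 0" "jac_CS hC sb cr < 0"
  using assms unfolding jac_SC_def jac_CS_def by auto

lemma solution_with_zero_velocity_is_constant:
  assumes sol: "is_solution S fS fC hS hC lamS lamC sb cr"
    and bound: "\<And>t. \<bar>jac_SS S fS hS lamS (sb t) (cr t)\<bar> + \<bar>jac_SC hS (sb t) (cr t)\<bar>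
                    + \<bar>jac_CS hC (sb t) (cr t)\<bar> + \<bar>jac_CC S fC hC lamC (sb t) (cr t)\<bar> \<le> K"
    and "SB_rhs S fS hS lamS (sb t0) (cr t0) = 0" "CR_rhs S fC hC lamC (sb t0) (cr t0) = 0"
  shows "sb t1 = sb t2 \<and> cr t1 = cr t2"
proof -
  have "SB_rhs S fS hS lamS (sb t) (cr t) = 0 \<and> CR_rhs S fC hC lamC (sb t) (cr t) = 0" for t
    using linear_system_zero_propagates[OF velocity_variational_equation[OF sol] bound]
      assms(3,4) by blast
  then have "(sb has_real_derivative 0) (at t)" "(cr has_real_derivative 0) (at t)" for t
    using sol unfolding is_solution_def by metis+
  then show ?thesis by (metis DERIV_isconst_all)
qed

theorem proposition2:
  fixes S fS fC hS hC lamS lamC :: real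
    and sb cr :: "real \<Rightarrow> real"
  assumes "0 < S" "S < 1"
    and "fS > 0" "fC > 0" "hS > 0" "hC > 0" "lamS > 0" "lamC > 0"
  shows "\<not> (nonconstant_periodic_orbit S fS fC hS hC lamS lamC sb cr \<and>
            (\<forall>t. 0 < sb t \<and> sb t < S \<and> 0 < cr t \<and> cr t < 1 - S))"
proof
  assume "nonconstant_periodic_orbit S fS fC hS hC lamS lamC sb cr \<and>
            (\<forall>t. 0 < sb t \<and> sb t < S \<and> 0 < cr t \<and> cr t < 1 - S)"
  then obtain T t1 t2 where sol: "is_solution S fS fC hS hC lamS lamC sb cr"
    and T: "T > 0" "\<And>t. sb (t + T) = sb t"
    and nonconst: "(sb t1, cr t1) \<noteq> (sb t2, cr t2)"
    and box: "\<And>t. 0 < sb t \<and> sb t < S \<and> 0 < cr t \<and> cr t < 1 - S"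
    unfolding nonconstant_periodic_orbit_def by blast
  define u where "u t = SB_rhs S fS hS lamS (sb t) (cr t)" for t
  define v where "v t = CR_rhs S fC hC lamC (sb t) (cr t)" for t
  obtain K where bound: "\<And>t. \<bar>jac_SS S fS hS lamS (sb t) (cr t)\<bar> + \<bar>jac_SC hS (sb t) (cr t)\<bar>
                    + \<bar>jac_CS hC (sb t) (cr t)\<bar> + \<bar>jac_CC S fC hC lamC (sb t) (cr t)\<bar> \<le> K"
    using jacobian_bounded_on_rectangle[OF assms(2-8)] box by blast
  have moving: "u t \<noteq> 0 \<or> v t \<noteq> 0" for t
    using solution_with_zero_velocity_is_constant[OF sol bound, of t t1 t2] nonconst
    unfolding u_def v_def by auto
  have Du: "\<And>t. (u has_real_derivative
            jac_SS S fS hS lamS (sb t) (cr t) * u t + jac_SC hS (sb t) (cr t) * v t) (at t)"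
    and Dv: "\<And>t. (v has_real_derivative
            jac_CS hC (sb t) (cr t) * u t + jac_CC S fC hC lamC (sb t) (cr t) * v t) (at t)"
    using velocity_variational_equation[OF sol] unfolding u_def[abs_def] v_def[abs_def] by blast+
  have unique_zero: "r = s" if "u r * v r = 0" "u s * v s = 0" for r s
    by (rule competitive_product_at_most_one_zero[OF Du Dv _ _ moving that])
       (use box assms in \<open>auto intro: jacobian_competitive\<close>)
  have Dsb: "\<And>t. (sb has_real_derivative u t) (at t)"
    using sol unfolding is_solution_def u_def by blast
  have "0 < T" "T < T + T" "sb 0 = sb T" "sb T = sb (T + T)"
    using T(1) T(2)[of 0] T(2)[of T] by simp_all
  obtain r where "r < T" "u r = 0"
    by (rule derivative_zero_between_equal_values[OF \<open>0 < T\<close> \<open>sb 0 = sb T\<close> Dsb])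
  moreover obtain s where "T < s" "u s = 0"
    by (rule derivative_zero_between_equal_values[OF \<open>T < T + T\<close> \<open>sb T = sb (T + T)\<close> Dsb])
  ultimately show False using unique_zero[of r s] by simp
qed

end
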